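(* There exists a compactly quasinilpotent Banach algebra which has no non-zero hypocompact ideals. (For example, $A=V\widehat{\otimes}C[0,1]$, where $V=\ell^1(w)$ with convolution $e_ie_j=e_{i+j}$ for a weight $w=(w_k)_{k\ge1}$ with $w_{k+1}/w_k\to0$, e.g. $w_k=k^{-k}$; this $A$ has no non-zero compact elements.)
   Context: For a bounded subset $M$ of a normed algebra, $\|M\|=\sup_{a\in M}\|a\|$, $M^n=\{a_1\cdots a_n:a_i\in M\}$ and $\rho(M)=\lim_n\|M^n\|^{1/n}$. A Banach algebra $A$ is compactly quasinilpotent if $\rho(M)=0$ for every precompact $M\subseteq A$. An element $a$ of a normed algebra $A$ is compact if the operator $x\mapsto axa$ on $A$ is compact. A normed algebra is hypocompact if every non-zero quotient $A/J$ by a closed ideal $J$ has a non-zero compact element; an ideal is hypocompact if it is hypocompact as a normed algebra. $\widehat\otimes$ is the projective tensor product; $\ell^1(w)$ is the space of sequences $\sum\lambda_ke_k$ with $\sum|\lambda_k|w_k<\infty$. *)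

theory Defs
  imports "HOL-Analysis.Analysis"
begin

text \<open>A complex normed algebra presented concretely on a carrier set inside an
ambient type (so that one can quantify existentially over algebras).\<close>

record 'a balg =
  ba_carrier :: "'a set"
  ba_zero :: 'a
  ba_add :: "'a \<Rightarrow> 'a \<Rightarrow> 'a"
  ba_neg :: "'a \<Rightarrow> 'a"
  ba_smul :: "complex \<Rightarrow> 'a \<Rightarrow> 'a"
  ba_mul :: "'a \<Rightarrow> 'a \<Rightarrow> 'a"
  ba_norm :: "'a \<Rightarrow> real"

definition ba_sub :: "'a balg \<Rightarrow> 'a \<Rightarrow> 'a \<Rightarrow> 'a" where
  "ba_sub A x y = ba_add A x (ba_neg A y)"

definition normed_algebra :: "'a balg \<Rightarrow> bool" where
  "normed_algebra A \<longleftrightarrow>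
    (let C = ba_carrier A; z = ba_zero A; p = ba_add A; m = ba_mul A;
         s = ba_smul A; n = ba_norm A in
     z \<in> C \<and>
     (\<forall>x\<in>C. \<forall>y\<in>C. p x y \<in> C \<and> m x y \<in> C) \<and>
     (\<forall>x\<in>C. ba_neg A x \<in> C) \<and>
     (\<forall>c. \<forall>x\<in>C. s c x \<in> C) \<and>
     (\<forall>x\<in>C. \<forall>y\<in>C. \<forall>w\<in>C. p (p x y) w = p x (p y w)) \<and>
     (\<forall>x\<in>C. \<forall>y\<in>C. p x y = p y x) \<and>
     (\<forall>x\<in>C. p x z = x) \<and>
     (\<forall>x\<in>C. p x (ba_neg A x) = z) \<and>
     (\<forall>c. \<forall>x\<in>C. \<forall>y\<in>C. s c (p x y) = p (s c x) (s c y)) \<and>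
     (\<forall>c d. \<forall>x\<in>C. s (c + d) x = p (s c x) (s d x)) \<and>
     (\<forall>c d. \<forall>x\<in>C. s (c * d) x = s c (s d x)) \<and>
     (\<forall>x\<in>C. s 1 x = x) \<and>
     (\<forall>x\<in>C. \<forall>y\<in>C. \<forall>w\<in>C. m (m x y) w = m x (m y w)) \<and>
     (\<forall>x\<in>C. \<forall>y\<in>C. \<forall>w\<in>C. m x (p y w) = p (m x y) (m x w)) \<and>
     (\<forall>x\<in>C. \<forall>y\<in>C. \<forall>w\<in>C. m (p x y) w = p (m x w) (m y w)) \<and>
     (\<forall>c. \<forall>x\<in>C. \<forall>y\<in>C. m (s c x) y = s c (m x y) \<and> m x (s c y) = s c (m x y)) \<and>
     (\<forall>x\<in>C. 0 \<le> n x \<and> (n x = 0 \<longleftrightarrow> x = z)) \<and>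
     (\<forall>x\<in>C. \<forall>y\<in>C. n (p x y) \<le> n x + n y) \<and>
     (\<forall>c. \<forall>x\<in>C. n (s c x) = cmod c * n x) \<and>
     (\<forall>x\<in>C. \<forall>y\<in>C. n (m x y) \<le> n x * n y))"

definition banach_algebra :: "'a balg \<Rightarrow> bool" where
  "banach_algebra A \<longleftrightarrow> normed_algebra A \<and>
    (\<forall>f. (\<forall>k. f k \<in> ba_carrier A) \<and>
         (\<forall>e>0. \<exists>N. \<forall>i\<ge>N. \<forall>j\<ge>N. ba_norm A (ba_sub A (f i) (f j)) < e)
       \<longrightarrow> (\<exists>l\<in>ba_carrier A. (\<lambda>k. ba_norm A (ba_sub A (f k) l)) \<longlonglongrightarrow> 0))"

definition ba_precompact :: "'a balg \<Rightarrow> 'a set \<Rightarrow> bool" where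
  "ba_precompact A M \<longleftrightarrow> M \<subseteq> ba_carrier A \<and>
    (\<forall>e>0. \<exists>F. finite F \<and> F \<subseteq> ba_carrier A \<and>
       (\<forall>x\<in>M. \<exists>y\<in>F. ba_norm A (ba_sub A x y) < e))"

text \<open>\<open>ba_setpow A M n\<close> is \<open>M^(n+1)\<close>.\<close>
fun ba_setpow :: "'a balg \<Rightarrow> 'a set \<Rightarrow> nat \<Rightarrow> 'a set" where
  "ba_setpow A M 0 = M"
| "ba_setpow A M (Suc n) = {ba_mul A x y | x y. x \<in> M \<and> y \<in> ba_setpow A M n}"

definition ba_setnorm :: "'a balg \<Rightarrow> 'a set \<Rightarrow> real" where
  "ba_setnorm A M = Sup (insert 0 (ba_norm A ` M))"

text \<open>\<open>\<rho>(M) = lim \<parallel>M^n\<parallel>^(1/n)\<close>; the limit always exists for bounded \<open>M\<close>,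
  so \<open>\<rho>(M) = 0\<close> means the sequence tends to 0.\<close>
definition compactly_quasinilpotent :: "'a balg \<Rightarrow> bool" where
  "compactly_quasinilpotent A \<longleftrightarrow>
    (\<forall>M. ba_precompact A M \<longrightarrow>
      (\<lambda>n. ba_setnorm A (ba_setpow A M n) powr (1 / real (Suc n))) \<longlonglongrightarrow> 0)"

definition ba_ideal :: "'a balg \<Rightarrow> 'a set \<Rightarrow> 'a set \<Rightarrow> bool" where
  "ba_ideal A S J \<longleftrightarrow> J \<subseteq> S \<and> ba_zero A \<in> J \<and>
    (\<forall>x\<in>J. \<forall>y\<in>J. ba_add A x y \<in> J) \<and>
    (\<forall>c. \<forall>x\<in>J. ba_smul A c x \<in> J) \<and>
    (\<forall>a\<in>S. \<forall>x\<in>J. ba_mul A a x \<in> J \<and> ba_mul A x a \<in> J)"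

definition ba_closed_in :: "'a balg \<Rightarrow> 'a set \<Rightarrow> 'a set \<Rightarrow> bool" where
  "ba_closed_in A S J \<longleftrightarrow>
    (\<forall>f x. (\<forall>k. f k \<in> J) \<and> x \<in> S \<and> (\<lambda>k. ba_norm A (ba_sub A (f k) x)) \<longlonglongrightarrow> 0
       \<longrightarrow> x \<in> J)"

definition ba_qnorm :: "'a balg \<Rightarrow> 'a set \<Rightarrow> 'a \<Rightarrow> real" where
  "ba_qnorm A J x = Inf ((\<lambda>j. ba_norm A (ba_sub A x j)) ` J)"

text \<open>\<open>a + J\<close> is a compact element of \<open>S/J\<close>: the operator \<open>x+J \<mapsto> axa+J\<close> on \<open>S/J\<close>
  maps the closed unit ball onto a precompact set (quotient norm).\<close>
definition ba_compact_elem_quot :: "'a balg \<Rightarrow> 'a set \<Rightarrow> 'a set \<Rightarrow> 'a \<Rightarrow> bool" where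
  "ba_compact_elem_quot A S J a \<longleftrightarrow>
    (\<forall>e>0. \<exists>F. finite F \<and> F \<subseteq> S \<and>
       (\<forall>x\<in>S. ba_qnorm A J x \<le> 1 \<longrightarrow>
          (\<exists>y\<in>F. ba_qnorm A J (ba_sub A (ba_mul A a (ba_mul A x a)) y) < e)))"

definition ba_hypocompact :: "'a balg \<Rightarrow> 'a set \<Rightarrow> bool" where
  "ba_hypocompact A S \<longleftrightarrow>
    (\<forall>J. ba_ideal A S J \<and> ba_closed_in A S J \<and> J \<noteq> S \<longrightarrow>
       (\<exists>a\<in>S. a \<notin> J \<and> ba_compact_elem_quot A S J a))"

end

theory Submission
  imports Defs "HOL-Library.Nat_Bijection"
begin

text \<open>The witness is an algebra of non-commutative power series without constant term in
countably many letters: a series \<open>g\<close> gives a coefficient \<open>g W\<close> to every non-empty word \<open>W\<close>,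
the norm is \<open>sup\<^sub>W |g W| 2^(-|W|^2)\<close>, and the product is induced by concatenation of words.
Since \<open>2^(-(i+j)^2) = 2^(-i^2) 2^(-j^2) 4^(-i j)\<close>, multiplying by a series supported on words
of length \<open>\<ge> k\<close> gains a factor \<open>2^(-k)\<close>; hence a product of \<open>n+1\<close> elements of norm \<open>\<le> K\<close>
has norm at most \<open>(K 2^(-n/2))^(n+1)\<close>, and every bounded set, not only every precompact one,
has joint spectral radius 0.

If \<open>a\<close> has a non-zero coefficient at the word \<open>v\<close> and \<open>n \<noteq> m\<close> are letters not occurring in
\<open>v\<close>, then \<open>a e\<^sub>n a e\<^sub>m a\<close> has coefficient \<open>(a v)^3\<close> at the word \<open>v n v m v\<close>, while
\<open>a e\<^sub>n\<^sub>' a e\<^sub>m\<^sub>' a\<close> vanishes there for every other fresh letter \<open>n'\<close>. So the elements \<open>a x a\<close>,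
with \<open>x = e\<^sub>n a e\<^sub>m / \<parallel>a\<parallel>\<close> in the unit ball of any ideal containing \<open>a\<close>, contain an infinite
separated sequence: no non-zero element is compact, and every non-zero ideal already fails
hypocompactness at its zero quotient.\<close>

definition weight :: "nat \<Rightarrow> real" where
  "weight L = (1/2) ^ (L * L)"

definition wbounded :: "(nat list \<Rightarrow> complex) \<Rightarrow> bool" where
  "wbounded g \<longleftrightarrow> g [] = 0 \<and> bdd_above (range (\<lambda>W. cmod (g W) * weight (length W)))"

definition wnorm :: "(nat list \<Rightarrow> complex) \<Rightarrow> real" where
  "wnorm g = (SUP W. cmod (g W) * weight (length W))"

definition wmult :: "(nat list \<Rightarrow> complex) \<Rightarrow> (nat list \<Rightarrow> complex) \<Rightarrow> nat list \<Rightarrow> complex" where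
  "wmult a b = (\<lambda>W. \<Sum>i<length W. a (take i W) * b (drop i W))"

definition letter :: "nat \<Rightarrow> nat list \<Rightarrow> complex" where
  "letter n = (\<lambda>W. if W = [n] then 1 else 0)"

lemma weight_pos: "0 < weight L"
  by (simp add: weight_def)

lemma weight_le_1: "weight L \<le> 1"
  by (simp add: weight_def power_le_one)

lemma weight_add: "weight (i + j) = weight i * weight j * (1/2) ^ (2 * i * j)"
proof -
  have "(i + j) * (i + j) = i * i + j * j + 2 * i * j"
    by (simp add: algebra_simps)
  then show ?thesis
    by (simp add: weight_def power_add)
qed

lemma real_le_two_power_pred: "1 \<le> n \<Longrightarrow> real n \<le> 2 ^ (n - 1)"
proof (induction n)
  case (Suc n)
  then show ?case by (cases n) auto
qed simp

lemma weight_gap: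
  assumes "1 \<le> i" "1 \<le> j" "k \<le> j"
  shows "(1/2::real) ^ (2 * i * j) \<le> (1/2) ^ k / real (i + j)"
proof -
  obtain i' j' where "i = Suc i'" "j = Suc j'"
    using assms by (metis Suc_le_D One_nat_def)
  then have "i + j - 1 + k \<le> 2 * i * j"
    using assms by (simp add: algebra_simps)
  then have "(1/2::real) ^ (2 * i * j) \<le> (1/2) ^ (i + j - 1) * (1/2) ^ k"
    unfolding power_add[symmetric] by (rule power_decreasing) auto
  also have "(1/2::real) ^ (i + j - 1) \<le> 1 / real (i + j)"
    using real_le_two_power_pred[of "i + j"] assms by (simp add: field_simps power_divide)
  then have "(1/2::real) ^ (i + j - 1) * (1/2) ^ k \<le> 1 / real (i + j) * (1/2) ^ k"
    by (rule mult_right_mono) simp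
  finally show ?thesis
    by simp
qed

lemma wnorm_upper: "wbounded g \<Longrightarrow> cmod (g W) * weight (length W) \<le> wnorm g"
  unfolding wbounded_def wnorm_def by (auto intro: cSUP_upper)

lemma wnorm_least: "(\<And>W. cmod (g W) * weight (length W) \<le> B) \<Longrightarrow> wnorm g \<le> B"
  unfolding wnorm_def by (rule cSUP_least) auto

lemma wboundedI: "g [] = 0 \<Longrightarrow> (\<And>W. cmod (g W) * weight (length W) \<le> B) \<Longrightarrow> wbounded g"
  unfolding wbounded_def bdd_above_def by auto

lemma wbounded_Nil: "wbounded g \<Longrightarrow> g [] = 0"
  by (simp add: wbounded_def)

lemma wnorm_nonneg: "wbounded g \<Longrightarrow> 0 \<le> wnorm g"
  using wnorm_upper[of g "[]"] by (simp add: wbounded_def)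

lemma wnorm_zero: "wnorm (\<lambda>_. 0) = 0"
  by (simp add: wnorm_def)

lemma wnorm_eq_0_iff: "wbounded g \<Longrightarrow> wnorm g = 0 \<longleftrightarrow> g = (\<lambda>_. 0)"
proof
  assume g: "wbounded g" and "wnorm g = 0"
  then have "cmod (g W) * weight (length W) \<le> 0" for W
    using wnorm_upper[OF g, of W] by simp
  then show "g = (\<lambda>_. 0)"
    using weight_pos by (metis mult_le_0_iff norm_le_zero_iff not_le)
qed (simp add: wnorm_zero)

lemma wmult_term_bound:
  assumes a: "wbounded a" and b: "wbounded b" and b_short: "\<And>u. length u < k \<Longrightarrow> b u = 0"
    and "i < length W"
  shows "cmod (a (take i W) * b (drop i W)) * weight (length W)
    \<le> (1/2) ^ k * wnorm a * wnorm b / real (length W)"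
proof (cases "i = 0 \<or> length W - i < k")
  case True
  then have "a (take i W) * b (drop i W) = 0"
    using wbounded_Nil[OF a] b_short[of "drop i W"] by auto
  then show ?thesis
    using wnorm_nonneg[OF a] wnorm_nonneg[OF b] by (simp only: norm_zero mult_zero_left) simp
next
  case False
  define j where "j = length W - i"
  have ij: "1 \<le> i" "1 \<le> j" "k \<le> j" "length W = i + j"
    using False \<open>i < length W\<close> unfolding j_def by auto
  have "cmod (a (take i W) * b (drop i W)) * weight (length W) =
      (cmod (a (take i W)) * weight i) * (cmod (b (drop i W)) * weight j) * (1/2) ^ (2 * i * j)"
    by (simp add: ij(4) weight_add norm_mult)
  also have "\<dots> \<le> wnorm a * wnorm b * ((1/2) ^ k / real (i + j))"
    using wnorm_upper[OF a, of "take i W"] wnorm_upper[OF b, of "drop i W"] \<open>i < length W\<close>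
      weight_gap[OF ij(1-3)] wnorm_nonneg[OF a] wnorm_nonneg[OF b]
    by (intro mult_mono) (auto simp: weight_pos less_imp_le j_def)
  finally show ?thesis
    by (simp add: ij(4) mult_ac)
qed

lemma wmult_coeff_bound:
  assumes a: "wbounded a" and b: "wbounded b" and b_short: "\<And>u. length u < k \<Longrightarrow> b u = 0"
  shows "cmod (wmult a b W) * weight (length W) \<le> (1/2) ^ k * wnorm a * wnorm b"
proof -
  define L where "L = length W"
  define C where "C = (1/2::real) ^ k * wnorm a * wnorm b"
  have "cmod (wmult a b W) * weight L \<le> (\<Sum>i<L. cmod (a (take i W) * b (drop i W))) * weight L"
    unfolding wmult_def L_def
    by (rule mult_right_mono) (auto intro: norm_sum simp: weight_pos less_imp_le)
  also have "\<dots> = (\<Sum>i<L. cmod (a (take i W) * b (drop i W)) * weight L)"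
    by (simp add: sum_distrib_right)
  also have "\<dots> \<le> real (card {..<L}) * (C / real L)"
    using wmult_term_bound[OF assms] unfolding C_def L_def by (intro sum_bounded_above) auto
  also have "\<dots> \<le> C"
    using wnorm_nonneg[OF a] wnorm_nonneg[OF b] by (cases "L = 0") (auto simp: C_def)
  finally show ?thesis
    unfolding C_def L_def .
qed

lemma wmult_Nil: "wmult a b [] = 0"
  by (simp add: wmult_def)

lemma wbounded_wmult: "wbounded a \<Longrightarrow> wbounded b \<Longrightarrow> wbounded (wmult a b)"
  using wmult_coeff_bound[of a b 0]
  by (intro wboundedI[where B = "wnorm a * wnorm b"]) (auto simp: wmult_Nil)

lemma wnorm_wmult_long:
  "wbounded a \<Longrightarrow> wbounded b \<Longrightarrow> (\<And>u. length u < k \<Longrightarrow> b u = 0) \<Longrightarrow>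
    wnorm (wmult a b) \<le> (1/2) ^ k * wnorm a * wnorm b"
  by (rule wnorm_least) (rule wmult_coeff_bound)

lemma wnorm_wmult: "wbounded a \<Longrightarrow> wbounded b \<Longrightarrow> wnorm (wmult a b) \<le> wnorm a * wnorm b"
  using wnorm_wmult_long[of a b 0] by simp

lemma wnorm_add_coeff:
  assumes g: "wbounded g" and h: "wbounded h"
  shows "cmod (g W + h W) * weight (length W) \<le> wnorm g + wnorm h"
proof -
  have "cmod (g W + h W) * weight (length W) \<le> (cmod (g W) + cmod (h W)) * weight (length W)"
    by (rule mult_right_mono) (auto intro: norm_triangle_ineq less_imp_le weight_pos)
  also have "\<dots> \<le> wnorm g + wnorm h"
    using wnorm_upper[OF g, of W] wnorm_upper[OF h, of W] by (simp add: distrib_right)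
  finally show ?thesis .
qed

lemma wbounded_add: "wbounded g \<Longrightarrow> wbounded h \<Longrightarrow> wbounded (\<lambda>W. g W + h W)"
  by (rule wboundedI[where B = "wnorm g + wnorm h"]) (auto simp: wbounded_def wnorm_add_coeff)

lemma wnorm_add: "wbounded g \<Longrightarrow> wbounded h \<Longrightarrow> wnorm (\<lambda>W. g W + h W) \<le> wnorm g + wnorm h"
  by (rule wnorm_least) (rule wnorm_add_coeff)

lemma wnorm_scale_coeff:
  "wbounded g \<Longrightarrow> cmod (c * g W) * weight (length W) \<le> cmod c * wnorm g"
  using wnorm_upper[of g W] by (simp add: norm_mult mult.assoc mult_left_mono)

lemma wbounded_scale: "wbounded g \<Longrightarrow> wbounded (\<lambda>W. c * g W)"
  by (rule wboundedI[where B = "cmod c * wnorm g"]) (auto simp: wbounded_def wnorm_scale_coeff)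

lemma wnorm_scale: "wbounded g \<Longrightarrow> wnorm (\<lambda>W. c * g W) = cmod c * wnorm g"
proof (cases "c = 0")
  case False
  assume g: "wbounded g"
  have le: "wnorm (\<lambda>W. d * h W) \<le> cmod d * wnorm h" if "wbounded h" for d h
    by (rule wnorm_least) (rule wnorm_scale_coeff[OF that])
  have "wnorm g = wnorm (\<lambda>W. inverse c * (c * g W))"
    using False by (simp add: mult.assoc[symmetric])
  also have "\<dots> \<le> cmod (inverse c) * wnorm (\<lambda>W. c * g W)"
    by (rule le[OF wbounded_scale[OF g]])
  also have "\<dots> = wnorm (\<lambda>W. c * g W) / cmod c"
    by (simp add: norm_inverse divide_inverse mult.commute)
  finally have "cmod c * wnorm g \<le> wnorm (\<lambda>W. c * g W)"
    using False by (simp add: field_simps)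
  with le[OF g, of c] show ?thesis
    by simp
qed (simp add: wnorm_zero)

lemma wbounded_uminus: "wbounded g \<Longrightarrow> wbounded (\<lambda>W. - g W)"
  using wbounded_scale[of g "-1"] by simp

lemma wnorm_uminus: "wbounded g \<Longrightarrow> wnorm (\<lambda>W. - g W) = wnorm g"
  using wnorm_scale[of g "-1"] by simp

lemma wbounded_zero: "wbounded (\<lambda>_. 0)"
  by (rule wboundedI[where B = 0]) auto

lemma wbounded_letter: "wbounded (letter n)"
  by (rule wboundedI[where B = 1]) (auto simp: letter_def weight_le_1)

lemma wnorm_letter: "wnorm (letter n) \<le> 1"
  by (rule wnorm_least) (auto simp: letter_def weight_le_1)

lemma wmult_add_right: "wmult a (\<lambda>W. b W + c W) = (\<lambda>W. wmult a b W + wmult a c W)"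
  by (simp add: wmult_def distrib_left sum.distrib)

lemma wmult_add_left: "wmult (\<lambda>W. a W + b W) c = (\<lambda>W. wmult a c W + wmult b c W)"
  by (simp add: wmult_def distrib_right sum.distrib)

lemma wmult_scale_left: "wmult (\<lambda>W. s * a W) c = (\<lambda>W. s * wmult a c W)"
  by (simp add: wmult_def sum_distrib_left mult.assoc)

lemma wmult_scale_right: "wmult a (\<lambda>W. s * c W) = (\<lambda>W. s * wmult a c W)"
  by (simp add: wmult_def sum_distrib_left mult.left_commute)

lemma wmult_zero_left: "wmult (\<lambda>_. 0) b = (\<lambda>_. 0)"
  by (simp add: wmult_def)

lemma wmult_zero_right: "wmult a (\<lambda>_. 0) = (\<lambda>_. 0)"
  by (simp add: wmult_def)

lemma sum_lessThan_triangle_swap: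
  "(\<Sum>j<L. \<Sum>i<j. F i j) = (\<Sum>i<L. \<Sum>j\<in>{Suc i..<L}. (F i j :: 'a :: comm_monoid_add))"
proof (induction L)
  case (Suc L)
  have "(\<Sum>i<Suc L. \<Sum>j\<in>{Suc i..<Suc L}. F i j) = (\<Sum>i<L. (\<Sum>j\<in>{Suc i..<L}. F i j) + F i L)"
    by (simp add: sum.distrib)
  then show ?case
    using Suc by (simp add: sum.distrib)
qed simp

text \<open>The hypothesis is needed: the right-hand side contains terms with the empty middle
  factor \<open>b []\<close>, which do not occur on the left.\<close>
lemma wmult_assoc:
  assumes "b [] = 0"
  shows "wmult (wmult a b) c = wmult a (wmult b c)"
proof
  fix W :: "nat list"
  define L where "L = length W"
  define F where "F i j = a (take i W) * b (take (j - i) (drop i W)) * c (drop j W)" for i j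
  have "wmult (wmult a b) c W = (\<Sum>j<L. \<Sum>i<j. F i j)"
    unfolding wmult_def L_def F_def
    by (intro sum.cong refl) (simp add: sum_distrib_right min_def drop_take)
  also have "\<dots> = (\<Sum>i<L. \<Sum>j\<in>{Suc i..<L}. F i j)"
    by (rule sum_lessThan_triangle_swap)
  also have "\<dots> = wmult a (wmult b c) W"
    unfolding wmult_def L_def
  proof (intro sum.cong refl)
    fix i assume i: "i \<in> {..<length W}"
    have "(\<Sum>t<length (drop i W). b (take t (drop i W)) * c (drop t (drop i W)))
       = (\<Sum>t\<in>{Suc 0..<length W - i}. b (take t (drop i W)) * c (drop t (drop i W)))"
    proof -
      have "{..<length W - i} = insert 0 {Suc 0..<length W - i}"
        using i by auto
      then show ?thesis
        using assms by simp
    qed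
    also have "\<dots> = (\<Sum>j\<in>{Suc i..<length W}. b (take (j - i) (drop i W)) * c (drop j W))"
      using i by (intro sum.reindex_bij_witness[where i = "\<lambda>j. j - i" and j = "\<lambda>t. t + i"])
        (auto simp: add.commute)
    finally show "(\<Sum>j\<in>{Suc i..<length W}. F i j) =
        a (take i W) * (\<Sum>t<length (drop i W). b (take t (drop i W)) * c (drop t (drop i W)))"
      unfolding F_def by (simp add: sum_distrib_left mult.assoc)
  qed
  finally show "wmult (wmult a b) c W = wmult a (wmult b c) W" .
qed

lemma wbounded_diff: "wbounded g \<Longrightarrow> wbounded h \<Longrightarrow> wbounded (\<lambda>W. g W - h W)"
  using wbounded_add[of g "\<lambda>W. - h W"] wbounded_uminus[of h] by simp

lemma wnorm_diff_coeff:
  "wbounded g \<Longrightarrow> wbounded h \<Longrightarrow> cmod (g W - h W) * weight (length W) \<le> wnorm (\<lambda>W. g W - h W)"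
  using wnorm_upper[OF wbounded_diff] by blast

lemma wnorm_Cauchy_coeff:
  fixes g :: "nat \<Rightarrow> nat list \<Rightarrow> complex"
  assumes bounded: "\<And>k. wbounded (g k)"
    and Cauchy: "\<forall>e>0. \<exists>N. \<forall>i\<ge>N. \<forall>j\<ge>N. wnorm (\<lambda>W. g i W - g j W) < e"
  shows "Cauchy (\<lambda>k. g k W)"
proof (rule CauchyI)
  fix e :: real assume "0 < e"
  then obtain N where N: "\<forall>i\<ge>N. \<forall>j\<ge>N. wnorm (\<lambda>W. g i W - g j W) < e * weight (length W)"
    using Cauchy weight_pos by (meson mult_pos_pos)
  have "cmod (g i W - g j W) * weight (length W) < e * weight (length W)" if "N \<le> i" "N \<le> j" for i j
    using wnorm_diff_coeff[OF bounded[of i] bounded[of j], of W] N that by (meson le_less_trans)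
  then show "\<exists>M. \<forall>m\<ge>M. \<forall>n\<ge>M. norm (g m W - g n W) < e"
    using weight_pos[of "length W"] by auto
qed

lemma wnorm_Cauchy_uniform_coeff:
  fixes g :: "nat \<Rightarrow> nat list \<Rightarrow> complex"
  assumes bounded: "\<And>k. wbounded (g k)"
    and Cauchy: "\<forall>e>0. \<exists>N. \<forall>i\<ge>N. \<forall>j\<ge>N. wnorm (\<lambda>W. g i W - g j W) < e"
    and l: "\<And>W. (\<lambda>k. g k W) \<longlonglongrightarrow> l W" and "0 < e"
  shows "\<exists>N. \<forall>i\<ge>N. \<forall>W. cmod (g i W - l W) * weight (length W) \<le> e"
proof -
  obtain N where N: "\<forall>i\<ge>N. \<forall>j\<ge>N. wnorm (\<lambda>W. g i W - g j W) < e"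
    using Cauchy \<open>0 < e\<close> by blast
  have "cmod (g i W - l W) * weight (length W) \<le> e" if "N \<le> i" for i W
  proof (rule LIMSEQ_le_const2)
    show "(\<lambda>j. cmod (g i W - g j W) * weight (length W)) \<longlonglongrightarrow> cmod (g i W - l W) * weight (length W)"
      by (intro tendsto_intros l)
    show "\<exists>N'. \<forall>j\<ge>N'. cmod (g i W - g j W) * weight (length W) \<le> e"
      using wnorm_diff_coeff[OF bounded bounded] N that by (meson less_imp_le order_trans)
  qed
  then show ?thesis
    by blast
qed

lemma wbounded_complete:
  fixes g :: "nat \<Rightarrow> nat list \<Rightarrow> complex"
  assumes bounded: "\<And>k. wbounded (g k)"
    and Cauchy: "\<forall>e>0. \<exists>N. \<forall>i\<ge>N. \<forall>j\<ge>N. wnorm (\<lambda>W. g i W - g j W) < e"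
  shows "\<exists>l. wbounded l \<and> (\<lambda>k. wnorm (\<lambda>W. g k W - l W)) \<longlonglongrightarrow> 0"
proof -
  have "convergent (\<lambda>k. g k W)" for W
    using wnorm_Cauchy_coeff[OF assms] by (simp add: Cauchy_convergent_iff)
  then obtain l where l: "\<And>W. (\<lambda>k. g k W) \<longlonglongrightarrow> l W"
    unfolding convergent_def by metis
  note uniform = wnorm_Cauchy_uniform_coeff[OF assms l]
  have "(\<lambda>k. g k []) \<longlonglongrightarrow> 0"
    using wbounded_Nil[OF bounded] by simp
  then have l_Nil: "l [] = 0"
    using l[of "[]"] by (metis LIMSEQ_unique)
  obtain N1 where N1: "\<forall>W. cmod (g N1 W - l W) * weight (length W) \<le> 1"
    using uniform[of 1] by auto
  have l_bounded: "wbounded l"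
  proof (rule wboundedI[where g = l, OF l_Nil])
    fix W
    have "cmod (l W) \<le> cmod (g N1 W) + cmod (g N1 W - l W)"
      by (metis norm_triangle_sub norm_minus_commute)
    then have "cmod (l W) * weight (length W) \<le> (cmod (g N1 W) + cmod (g N1 W - l W)) * weight (length W)"
      by (rule mult_right_mono) (simp add: weight_pos less_imp_le)
    then show "cmod (l W) * weight (length W) \<le> wnorm (g N1) + 1"
      using spec[OF N1, of W] wnorm_upper[OF bounded, of N1 W] by (simp add: distrib_right)
  qed
  have "(\<lambda>k. wnorm (\<lambda>W. g k W - l W)) \<longlonglongrightarrow> 0"
  proof (rule LIMSEQ_I)
    fix r :: real assume "0 < r"
    then obtain N where N: "\<forall>i\<ge>N. \<forall>W. cmod (g i W - l W) * weight (length W) \<le> r / 2"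
      using uniform[of "r / 2"] by auto
    have "wnorm (\<lambda>W. g n W - l W) \<le> r / 2" if "N \<le> n" for n
      using N that by (intro wnorm_least) simp
    moreover have "0 \<le> wnorm (\<lambda>W. g n W - l W)" for n
      by (intro wnorm_nonneg wbounded_diff bounded l_bounded)
    ultimately show "\<exists>N. \<forall>n\<ge>N. norm (wnorm (\<lambda>W. g n W - l W) - 0) < r"
      using \<open>0 < r\<close> by force
  qed
  with l_bounded show ?thesis
    by blast
qed

lemma wmult_letter_left:
  assumes "d [] = 0"
  shows "wmult (letter n) d q = (case q of [] \<Rightarrow> 0 | c # r \<Rightarrow> if c = n then d r else 0)"
proof (cases q)
  case (Cons c r)
  have "wmult (letter n) d (c # r) =
      letter n [] * d (c # r) + (\<Sum>i<length r. letter n (c # take i r) * d (drop i r))"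
    unfolding wmult_def by (simp del: sum.lessThan_Suc add: sum.lessThan_Suc_shift)
  also have "\<dots> = (\<Sum>i<length r. if i = 0 then (if c = n then d r else 0) else 0)"
  proof -
    have "(\<Sum>i<length r. letter n (c # take i r) * d (drop i r)) =
        (\<Sum>i<length r. if i = 0 then (if c = n then d r else 0) else 0)"
      by (intro sum.cong refl) (auto simp: letter_def)
    then show ?thesis
      by (simp add: letter_def)
  qed
  also have "\<dots> = (if c = n then d r else 0)"
    using assms by (cases r) auto
  finally show ?thesis
    using Cons by simp
qed (simp add: wmult_Nil)

lemma wmult_letter_drop:
  "d [] = 0 \<Longrightarrow> i < length W \<Longrightarrow>
    wmult (letter n) d (drop i W) = (if W ! i = n then d (drop (Suc i) W) else 0)"
  by (simp add: wmult_letter_left Cons_nth_drop_Suc[symmetric])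

lemma wmult_letter_split:
  assumes "n \<notin> set p" "n \<notin> set r" "d [] = 0"
  shows "wmult a (wmult (letter n) d) (p @ n # r) = a p * d r"
proof -
  let ?W = "p @ n # r"
  have unique: "?W ! i = n \<longleftrightarrow> i = length p" if "i < length ?W" for i
    using that assms(1,2)
    by (cases "i < length p") (auto simp: nth_append nth_Cons' dest: nth_mem split: if_splits)
  have "wmult a (wmult (letter n) d) ?W = (\<Sum>i<length ?W. if i = length p then a p * d r else 0)"
    unfolding wmult_def[of a]
  proof (intro sum.cong refl)
    fix i assume "i \<in> {..<length ?W}"
    then show "a (take i ?W) * wmult (letter n) d (drop i ?W) = (if i = length p then a p * d r else 0)"
      using unique[of i] wmult_letter_drop[where d = d, OF assms(3), of i ?W n] by simp
  qed
  then show ?thesis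
    by simp
qed

lemma wmult_letter_absent:
  assumes "n \<notin> set W" "d [] = 0"
  shows "wmult a (wmult (letter n) d) W = 0"
  unfolding wmult_def[of a]
proof (intro sum.neutral ballI)
  fix i assume "i \<in> {..<length W}"
  then show "a (take i W) * wmult (letter n) d (drop i W) = 0"
    using assms nth_mem[of i W] by (auto simp: wmult_letter_drop[where d = d])
qed

definition fresh_letter :: "nat list \<Rightarrow> nat \<Rightarrow> nat" where
  "fresh_letter v k = Suc (sum_list v) + k"

lemma fresh_letter_notin: "fresh_letter v k \<notin> set v"
  using member_le_sum_list[of _ v] by (fastforce simp: fresh_letter_def)

definition sandwich :: "(nat list \<Rightarrow> complex) \<Rightarrow> nat \<Rightarrow> nat \<Rightarrow> nat list \<Rightarrow> complex" where
  "sandwich a n m = wmult a (wmult (wmult (letter n) (wmult a (letter m))) a)"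

lemma sandwich_at_word:
  assumes "wbounded a" "n \<notin> set v" "m \<notin> set v" "n \<noteq> m"
  shows "sandwich a n m (v @ n # v @ m # v) = a v * (a v * a v)"
proof -
  have "wmult (wmult (letter n) (wmult a (letter m))) a = wmult (letter n) (wmult a (wmult (letter m) a))"
    using wmult_assoc[of "wmult a (letter m)" "letter n" a] wmult_assoc[of "letter m" a a]
    by (simp add: wmult_Nil letter_def)
  moreover have "wmult a (wmult (letter m) a) (v @ m # v) = a v * a v"
    using assms by (intro wmult_letter_split) (auto simp: wbounded_Nil)
  ultimately show ?thesis
    using assms by (simp add: sandwich_def wmult_letter_split wmult_Nil)
qed

lemma sandwich_absent:
  assumes "n \<notin> set W"
  shows "sandwich a n m W = 0"
proof -
  have "wmult (wmult (letter n) (wmult a (letter m))) a = wmult (letter n) (wmult (wmult a (letter m)) a)"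
    by (rule wmult_assoc) (rule wmult_Nil)
  then show ?thesis
    using assms by (simp add: sandwich_def wmult_letter_absent wmult_Nil)
qed

lemma wbounded_sandwich: "wbounded a \<Longrightarrow> wbounded (sandwich a n m)"
  by (simp add: sandwich_def wbounded_wmult wbounded_letter)

lemma wnorm_triangle_coeff:
  assumes "wbounded g" "wbounded h" "wbounded y"
  shows "cmod (g W - h W) * weight (length W) \<le> wnorm (\<lambda>W. g W - y W) + wnorm (\<lambda>W. h W - y W)"
proof -
  have "cmod (g W - h W) \<le> cmod (g W - y W) + cmod (h W - y W)"
    using norm_diff_triangle_le[OF order_refl order_refl, of "g W" "h W" "y W"]
    by (simp add: norm_minus_commute)
  then have "cmod (g W - h W) * weight (length W) \<le> (cmod (g W - y W) + cmod (h W - y W)) * weight (length W)"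
    by (rule mult_right_mono) (simp add: weight_pos less_imp_le)
  then show ?thesis
    using wnorm_diff_coeff[OF assms(1,3), of W] wnorm_diff_coeff[OF assms(2,3), of W]
    by (simp add: distrib_right)
qed

lemma sandwiches_separated:
  fixes c :: complex and v :: "nat list"
  assumes "wbounded a" "wbounded y" "k \<noteq> k'"
  defines "s \<equiv> \<lambda>j W. c * sandwich a (fresh_letter v (2 * j)) (fresh_letter v (Suc (2 * j))) W"
  shows "cmod (c * (a v * (a v * a v))) * weight (3 * length v + 2)
    \<le> wnorm (\<lambda>W. s k W - y W) + wnorm (\<lambda>W. s k' W - y W)"
proof -
  define W where "W = v @ fresh_letter v (2 * k) # v @ fresh_letter v (Suc (2 * k)) # v"
  have "fresh_letter v (2 * k) \<noteq> fresh_letter v (Suc (2 * k))"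
    by (simp add: fresh_letter_def)
  then have "s k W = c * (a v * (a v * a v))"
    unfolding s_def W_def using assms(1) by (simp add: sandwich_at_word fresh_letter_notin)
  moreover have "fresh_letter v (2 * k') \<notin> set W"
    unfolding W_def using assms(3) fresh_letter_notin[of v "2 * k'"] by (auto simp: fresh_letter_def)
  then have "s k' W = 0"
    unfolding s_def by (simp add: sandwich_absent)
  moreover have "wbounded (s j)" for j
    unfolding s_def using assms(1) by (intro wbounded_scale wbounded_sandwich)
  moreover have "length W = 3 * length v + 2"
    unfolding W_def by simp
  ultimately show ?thesis
    using wnorm_triangle_coeff[of "s k" "s k'" y W] assms(2) by simp
qed

text \<open>The ambient type \<open>nat \<Rightarrow> real \<Rightarrow> complex\<close> is fixed by the statement: a word is stored at
  its code \<open>list_encode W\<close>, and the real argument is a dummy.\<close>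
definition embed_series :: "(nat list \<Rightarrow> complex) \<Rightarrow> nat \<Rightarrow> real \<Rightarrow> complex" where
  "embed_series g = (\<lambda>n t. g (list_decode n))"

definition series :: "(nat \<Rightarrow> real \<Rightarrow> complex) \<Rightarrow> nat list \<Rightarrow> complex" where
  "series f = (\<lambda>W. f (list_encode W) 0)"

lemma series_embed_series [simp]: "series (embed_series g) = g"
  by (simp add: series_def embed_series_def)

lemma embed_series_eq_iff [simp]: "embed_series g = embed_series h \<longleftrightarrow> g = h"
  by (metis series_embed_series)

lemma embed_series_in_image_iff [simp]: "embed_series g \<in> embed_series ` S \<longleftrightarrow> g \<in> S"
  by (metis series_embed_series image_iff)

lemma ball_embed_series_image [simp]: "(\<forall>x\<in>embed_series ` S. P x) \<longleftrightarrow> (\<forall>g\<in>S. P (embed_series g))"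
  by auto

definition word_algebra :: "(nat \<Rightarrow> real \<Rightarrow> complex) balg" where
  "word_algebra = \<lparr>ba_carrier = embed_series ` {g. wbounded g}, ba_zero = embed_series (\<lambda>_. 0),
     ba_add = \<lambda>x y. embed_series (\<lambda>W. series x W + series y W), ba_neg = \<lambda>x. embed_series (\<lambda>W. - series x W),
     ba_smul = \<lambda>c x. embed_series (\<lambda>W. c * series x W), ba_mul = \<lambda>x y. embed_series (wmult (series x) (series y)),
     ba_norm = \<lambda>x. wnorm (series x)\<rparr>"

lemma word_algebra_simps [simp]:
  "ba_carrier word_algebra = embed_series ` {g. wbounded g}"
  "ba_zero word_algebra = embed_series (\<lambda>_. 0)"
  "ba_add word_algebra x y = embed_series (\<lambda>W. series x W + series y W)"
  "ba_neg word_algebra x = embed_series (\<lambda>W. - series x W)"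
  "ba_smul word_algebra c x = embed_series (\<lambda>W. c * series x W)"
  "ba_mul word_algebra x y = embed_series (wmult (series x) (series y))"
  "ba_norm word_algebra x = wnorm (series x)"
  "ba_sub word_algebra x y = embed_series (\<lambda>W. series x W - series y W)"
  by (simp_all add: word_algebra_def ba_sub_def)

lemma word_algebra_carrierD:
  "x \<in> ba_carrier word_algebra \<Longrightarrow> wbounded (series x) \<and> x = embed_series (series x)"
  by auto

lemma normed_algebra_word_algebra: "normed_algebra word_algebra"
  unfolding normed_algebra_def Let_def word_algebra_simps ball_embed_series_image
  by (auto simp: wbounded_zero wbounded_add wbounded_wmult wbounded_uminus wbounded_scale
      add.assoc add.commute distrib_left distrib_right mult.assoc wbounded_Nil wmult_assoc
      wmult_add_left wmult_add_right wmult_scale_left wmult_scale_right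
      wnorm_nonneg wnorm_eq_0_iff wnorm_add wnorm_scale wnorm_wmult)

lemma banach_algebra_word_algebra: "banach_algebra word_algebra"
  unfolding banach_algebra_def
proof (intro conjI normed_algebra_word_algebra allI impI)
  fix f :: "nat \<Rightarrow> nat \<Rightarrow> real \<Rightarrow> complex"
  assume "(\<forall>k. f k \<in> ba_carrier word_algebra) \<and>
    (\<forall>e>0. \<exists>N. \<forall>i\<ge>N. \<forall>j\<ge>N. ba_norm word_algebra (ba_sub word_algebra (f i) (f j)) < e)"
  then obtain l where "wbounded l" "(\<lambda>k. wnorm (\<lambda>W. series (f k) W - l W)) \<longlonglongrightarrow> 0"
    using wbounded_complete[of "\<lambda>k. series (f k)"] word_algebra_carrierD by force
  then show "\<exists>l\<in>ba_carrier word_algebra. (\<lambda>k. ba_norm word_algebra (ba_sub word_algebra (f k) l)) \<longlonglongrightarrow> 0"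
    by (intro bexI[of _ "embed_series l"]) auto
qed

lemma word_algebra_nontrivial: "ba_carrier word_algebra \<noteq> {ba_zero word_algebra}"
proof
  assume "ba_carrier word_algebra = {ba_zero word_algebra}"
  then have "letter 0 = (\<lambda>_. 0)"
    using wbounded_letter[of 0] by (metis word_algebra_simps(1,2) embed_series_eq_iff
        embed_series_in_image_iff mem_Collect_eq singletonD)
  then show False
    by (metis letter_def zero_neq_one)
qed

lemma ba_setnorm_le:
  assumes "\<And>x. x \<in> M \<Longrightarrow> ba_norm A x \<le> B" "0 \<le> B"
  shows "ba_setnorm A M \<le> B"
  unfolding ba_setnorm_def using assms by (intro cSup_least) auto

lemma ba_setnorm_nonneg:
  assumes "\<And>x. x \<in> M \<Longrightarrow> ba_norm A x \<le> B"
  shows "0 \<le> ba_setnorm A M"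
  unfolding ba_setnorm_def using assms
  by (intro cSup_upper bdd_above_insert[THEN iffD2] bdd_aboveI2) auto

lemma powr_root_le:
  fixes x y :: real
  assumes "0 \<le> y" "y \<le> x ^ Suc n" "0 \<le> x"
  shows "y powr (1 / real (Suc n)) \<le> x"
proof -
  have "y powr (1 / real (Suc n)) \<le> (x ^ Suc n) powr (1 / real (Suc n))"
    using assms by (intro powr_mono2) auto
  also have "\<dots> = x"
  proof (cases "x = 0")
    case False
    then have "0 < x"
      using assms(3) by simp
    then have "(x ^ Suc n) powr (1 / real (Suc n)) = x powr (real (Suc n) * (1 / real (Suc n)))"
      by (simp only: powr_realpow[symmetric] powr_powr)
    then show ?thesis
      using \<open>0 < x\<close> by simp
  qed simp
  finally show ?thesis .
qed

lemma sqrt_half_power_step: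
  fixes K s :: real
  assumes "s\<^sup>2 = 1/2"
  shows "(1/2) ^ Suc n * K * (K * s ^ n) ^ Suc n = (K * s ^ Suc n) ^ Suc (Suc n)"
proof -
  have exponent: "Suc n * Suc (Suc n) = 2 * Suc n + n * Suc n"
    by (simp add: algebra_simps)
  have "(1/2::real) ^ Suc n = s ^ (2 * Suc n)"
    by (simp only: assms[symmetric] power_mult)
  then show ?thesis
    by (simp only: power_mult_distrib power_mult[symmetric] exponent power_add power_Suc[of K] mult_ac)
qed

lemma word_algebra_setpow_bound:
  assumes M: "M \<subseteq> ba_carrier word_algebra" "\<And>x. x \<in> M \<Longrightarrow> wnorm (series x) \<le> K" "0 \<le> K"
    and s: "s\<^sup>2 = 1/2" "0 \<le> s"
    and x: "x \<in> ba_setpow word_algebra M n"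
  shows "x \<in> ba_carrier word_algebra \<and> (\<forall>W. length W \<le> n \<longrightarrow> series x W = 0)
     \<and> wnorm (series x) \<le> (K * s ^ n) ^ Suc n"
  using x
proof (induction n arbitrary: x)
  case 0
  then show ?case
    using M word_algebra_carrierD by (force simp: wbounded_Nil)
next
  case (Suc n)
  then obtain a y where xy: "x = ba_mul word_algebra a y" "a \<in> M" "y \<in> ba_setpow word_algebra M n"
    by auto
  from Suc.IH[OF xy(3)] have y: "wbounded (series y)" "\<And>W. length W \<le> n \<Longrightarrow> series y W = 0"
      "wnorm (series y) \<le> (K * s ^ n) ^ Suc n"
    using word_algebra_carrierD by blast+
  have a: "wbounded (series a)" "wnorm (series a) \<le> K"
    using xy(2) M word_algebra_carrierD by blast+
  have x_eq: "series x = wmult (series a) (series y)"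
    using xy by simp
  have short: "series x W = 0" if "length W \<le> Suc n" for W
    unfolding x_eq wmult_def
  proof (intro sum.neutral ballI)
    fix i assume "i \<in> {..<length W}"
    then show "series a (take i W) * series y (drop i W) = 0"
      using that a(1) y(2)[of "drop i W"] by (cases "i = 0") (auto simp: wbounded_Nil)
  qed
  have "wnorm (series x) \<le> (1/2) ^ Suc n * wnorm (series a) * wnorm (series y)"
    unfolding x_eq by (rule wnorm_wmult_long[OF a(1) y(1)]) (simp add: y(2))
  also have "\<dots> \<le> (1/2) ^ Suc n * K * (K * s ^ n) ^ Suc n"
    using a y wnorm_nonneg M(3) by (intro mult_mono mult_left_mono) auto
  also have "\<dots> = (K * s ^ Suc n) ^ Suc (Suc n)"
    by (rule sqrt_half_power_step[OF s(1)])
  finally show ?case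
    using short x_eq wbounded_wmult[OF a(1) y(1)] xy(1) by simp
qed

lemma word_algebra_precompact_bounded:
  assumes "ba_precompact word_algebra M"
  obtains K where "0 \<le> K" "\<And>x. x \<in> M \<Longrightarrow> wnorm (series x) \<le> K"
proof -
  have M: "M \<subseteq> ba_carrier word_algebra"
    using assms by (simp add: ba_precompact_def)
  obtain F where F: "finite F" "F \<subseteq> ba_carrier word_algebra"
    "\<forall>x\<in>M. \<exists>y\<in>F. ba_norm word_algebra (ba_sub word_algebra x y) < 1"
    using assms unfolding ba_precompact_def by (meson zero_less_one)
  define K where "K = 1 + (\<Sum>y\<in>F. wnorm (series y))"
  have F_nonneg: "0 \<le> wnorm (series y)" if "y \<in> F" for y
    using F(2) that word_algebra_carrierD wnorm_nonneg by blast
  have "wnorm (series x) \<le> K" if "x \<in> M" for x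
  proof -
    obtain y where y: "y \<in> F" "wnorm (\<lambda>W. series x W - series y W) < 1"
      using F(3) \<open>x \<in> M\<close> by fastforce
    have bx: "wbounded (series x)" and "wbounded (series y)"
      using \<open>x \<in> M\<close> y M F(2) word_algebra_carrierD by blast+
    then have "wnorm (series x) \<le> wnorm (\<lambda>W. series x W - series y W) + wnorm (series y)"
      using wnorm_add[OF wbounded_diff[OF bx \<open>wbounded (series y)\<close>] \<open>wbounded (series y)\<close>]
      by simp
    also have "wnorm (series y) \<le> (\<Sum>y\<in>F. wnorm (series y))"
      using y(1) F(1) F_nonneg by (intro member_le_sum) auto
    finally show ?thesis
      using y(2) unfolding K_def by linarith
  qed
  moreover have "0 \<le> K"
    unfolding K_def using F_nonneg by (simp add: sum_nonneg)
  ultimately show ?thesis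
    using that by blast
qed

lemma compactly_quasinilpotent_word_algebra: "compactly_quasinilpotent word_algebra"
  unfolding compactly_quasinilpotent_def
proof (intro allI impI)
  fix M assume pre: "ba_precompact word_algebra M"
  then have M: "M \<subseteq> ba_carrier word_algebra"
    by (simp add: ba_precompact_def)
  obtain K where K: "0 \<le> K" "\<And>x. x \<in> M \<Longrightarrow> wnorm (series x) \<le> K"
    using word_algebra_precompact_bounded[OF pre] by blast
  define s :: real where "s = sqrt (1/2)"
  have s: "s\<^sup>2 = 1/2" "0 \<le> s" "s < 1"
    unfolding s_def by auto
  have norm_bound: "ba_norm word_algebra x \<le> (K * s ^ n) ^ Suc n"
    if "x \<in> ba_setpow word_algebra M n" for x n
    using word_algebra_setpow_bound[OF M K(2,1) s(1,2) that] by simp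
  have upper: "ba_setnorm word_algebra (ba_setpow word_algebra M n) powr (1 / real (Suc n)) \<le> K * s ^ n"
    for n
  proof (rule powr_root_le)
    show "0 \<le> ba_setnorm word_algebra (ba_setpow word_algebra M n)"
      using norm_bound by (rule ba_setnorm_nonneg)
    show "ba_setnorm word_algebra (ba_setpow word_algebra M n) \<le> (K * s ^ n) ^ Suc n"
      using norm_bound K(1) s(2) by (intro ba_setnorm_le) auto
  qed (use K(1) s(2) in simp)
  have lim: "(\<lambda>n. K * s ^ n) \<longlonglongrightarrow> 0"
    using s by (intro tendsto_mult_right_zero LIMSEQ_power_zero) auto
  show "(\<lambda>n. ba_setnorm word_algebra (ba_setpow word_algebra M n) powr (1 / real (Suc n))) \<longlonglongrightarrow> 0"
    using upper by (intro tendsto_sandwich[OF always_eventually always_eventually tendsto_const lim]) simp_all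
qed

lemma ba_qnorm_word_algebra_zero: "ba_qnorm word_algebra {ba_zero word_algebra} x = wnorm (series x)"
  by (simp add: ba_qnorm_def)

lemma word_algebra_zero_ideal:
  assumes "I \<subseteq> ba_carrier word_algebra" "ba_zero word_algebra \<in> I"
  shows "ba_ideal word_algebra I {ba_zero word_algebra}"
  using assms unfolding ba_ideal_def by (auto simp: wmult_zero_left wmult_zero_right)

lemma word_algebra_zero_closed:
  assumes "I \<subseteq> ba_carrier word_algebra"
  shows "ba_closed_in word_algebra I {ba_zero word_algebra}"
  unfolding ba_closed_in_def
proof (intro allI impI)
  fix f x
  assume "(\<forall>k. f k \<in> {ba_zero word_algebra}) \<and> x \<in> I \<and>
    (\<lambda>k. ba_norm word_algebra (ba_sub word_algebra (f k) x)) \<longlonglongrightarrow> 0"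
  then have x: "wbounded (series x)" "x = embed_series (series x)"
    and "(\<lambda>k. wnorm (\<lambda>W. - series x W)) \<longlonglongrightarrow> 0"
    using assms word_algebra_carrierD by auto
  then have "wnorm (series x) = 0"
    by (simp add: wnorm_uminus LIMSEQ_const_iff)
  then show "x \<in> {ba_zero word_algebra}"
    using x by (simp add: wnorm_eq_0_iff)
qed

text \<open>Two terms of the separated sequence would share a point of a finite \<open>\<delta>/2\<close>-net.\<close>
lemma word_algebra_not_compact_if_separated:
  fixes x :: "nat \<Rightarrow> nat \<Rightarrow> real \<Rightarrow> complex"
  assumes x: "\<And>k. x k \<in> I" "\<And>k. wnorm (series (x k)) \<le> 1"
    and sep: "\<And>k k' y. k \<noteq> k' \<Longrightarrow> y \<in> I \<Longrightarrow>
      \<delta> \<le> wnorm (\<lambda>W. series (ba_mul word_algebra a (ba_mul word_algebra (x k) a)) W - series y W)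
         + wnorm (\<lambda>W. series (ba_mul word_algebra a (ba_mul word_algebra (x k') a)) W - series y W)"
    and "0 < \<delta>"
  shows "\<not> ba_compact_elem_quot word_algebra I {ba_zero word_algebra} a"
proof
  define P where "P k = ba_mul word_algebra a (ba_mul word_algebra (x k) a)" for k
  assume "ba_compact_elem_quot word_algebra I {ba_zero word_algebra} a"
  then obtain F where F: "finite F" "F \<subseteq> I"
    "\<forall>z\<in>I. wnorm (series z) \<le> 1 \<longrightarrow>
       (\<exists>y\<in>F. wnorm (\<lambda>W. series (ba_mul word_algebra a (ba_mul word_algebra z a)) W - series y W) < \<delta> / 2)"
    using \<open>0 < \<delta>\<close>
    unfolding ba_compact_elem_quot_def ba_qnorm_word_algebra_zero word_algebra_simps(8) series_embed_series
    by (meson half_gt_zero)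
  then have "\<forall>k. \<exists>y\<in>F. wnorm (\<lambda>W. series (P k) W - series y W) < \<delta> / 2"
    using x unfolding P_def by blast
  then obtain f where f: "\<And>k. f k \<in> F" "\<And>k. wnorm (\<lambda>W. series (P k) W - series (f k) W) < \<delta> / 2"
    by metis
  have "\<not> inj f"
    using f(1) F(1) finite_imageD[of f UNIV] finite_subset[of "range f" F] by auto
  then obtain k k' where "k \<noteq> k'" "f k = f k'"
    unfolding inj_def by blast
  have "\<delta> \<le> wnorm (\<lambda>W. series (P k) W - series (f k) W) + wnorm (\<lambda>W. series (P k') W - series (f k') W)"
    using sep[of k k' "f k"] \<open>k \<noteq> k'\<close> \<open>f k = f k'\<close> f(1) F(2) unfolding P_def by auto
  also have "\<dots> < \<delta> / 2 + \<delta> / 2"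
    using f(2)[of k] f(2)[of k'] by simp
  finally show False
    by simp
qed

lemma word_algebra_no_compact_elem:
  assumes I: "ba_ideal word_algebra (ba_carrier word_algebra) I"
    and a: "a \<in> I" "a \<noteq> ba_zero word_algebra"
  shows "\<not> ba_compact_elem_quot word_algebra I {ba_zero word_algebra} a"
proof -
  have I_carrier: "I \<subseteq> ba_carrier word_algebra"
    and I_mul: "\<And>b z. b \<in> ba_carrier word_algebra \<Longrightarrow> z \<in> I \<Longrightarrow>
      ba_mul word_algebra b z \<in> I \<and> ba_mul word_algebra z b \<in> I"
    and I_smul: "\<And>c z. z \<in> I \<Longrightarrow> ba_smul word_algebra c z \<in> I"
    using I unfolding ba_ideal_def by blast+
  define A where "A = series a"
  have A: "wbounded A" "a = embed_series A"
    using a(1) I_carrier word_algebra_carrierD unfolding A_def by blast+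
  with a(2) obtain v where v: "A v \<noteq> 0"
    by fastforce
  have "0 < wnorm A"
    using wnorm_nonneg[OF A(1)] wnorm_eq_0_iff[OF A(1)] v by force
  define n where "n k = fresh_letter v (2 * k)" for k
  define m where "m k = fresh_letter v (Suc (2 * k))" for k
  define c where "c = complex_of_real (1 / wnorm A)"
  define x where "x k = ba_smul word_algebra c (ba_mul word_algebra (embed_series (letter (n k)))
    (ba_mul word_algebra a (embed_series (letter (m k)))))" for k
  have "embed_series (letter j) \<in> ba_carrier word_algebra" for j
    using wbounded_letter by simp
  then have x_in: "x k \<in> I" for k
    unfolding x_def using I_mul I_smul a(1) by blast
  have x_series: "series (x k) = (\<lambda>W. c * wmult (letter (n k)) (wmult A (letter (m k))) W)" for k
    unfolding x_def A_def by simp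
  have "wnorm (series (x k)) \<le> 1" for k
  proof -
    have "wnorm (wmult A (letter (m k))) \<le> wnorm A"
      using wnorm_wmult[OF A(1) wbounded_letter, of "m k"]
        mult_left_mono[OF wnorm_letter[of "m k"] wnorm_nonneg[OF A(1)]] by simp
    then have "wnorm (wmult (letter (n k)) (wmult A (letter (m k)))) \<le> wnorm A"
      using wnorm_wmult[OF wbounded_letter wbounded_wmult[OF A(1) wbounded_letter], of "n k" "m k"]
        mult_right_mono[OF wnorm_letter[of "n k"] wnorm_nonneg[OF wbounded_wmult[OF A(1) wbounded_letter[of "m k"]]]]
      by linarith
    moreover have "wnorm (series (x k)) = cmod c * wnorm (wmult (letter (n k)) (wmult A (letter (m k))))"
      unfolding x_series by (intro wnorm_scale wbounded_wmult wbounded_letter A(1))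
    ultimately show ?thesis
      using \<open>0 < wnorm A\<close> by (simp add: c_def norm_divide divide_le_eq_1)
  qed
  moreover have "series (ba_mul word_algebra a (ba_mul word_algebra (x k) a))
      = (\<lambda>W. c * sandwich A (n k) (m k) W)" for k
    unfolding sandwich_def by (simp add: x_series wmult_scale_left wmult_scale_right flip: A_def)
  then have "cmod (c * (A v * (A v * A v))) * weight (3 * length v + 2) \<le>
      wnorm (\<lambda>W. series (ba_mul word_algebra a (ba_mul word_algebra (x k) a)) W - series y W)
    + wnorm (\<lambda>W. series (ba_mul word_algebra a (ba_mul word_algebra (x k') a)) W - series y W)"
    if "k \<noteq> k'" "y \<in> I" for k k' y
    using sandwiches_separated[OF A(1) _ that(1), of "series y" c v] that(2) I_carrier word_algebra_carrierD
    unfolding n_def m_def by auto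
  moreover have "0 < cmod (c * (A v * (A v * A v))) * weight (3 * length v + 2)"
    using \<open>0 < wnorm A\<close> v weight_pos by (simp add: c_def)
  ultimately show ?thesis
    by (rule word_algebra_not_compact_if_separated[OF x_in])
qed

lemma word_algebra_not_hypocompact:
  assumes I: "ba_ideal word_algebra (ba_carrier word_algebra) I" and "I \<noteq> {ba_zero word_algebra}"
  shows "\<not> ba_hypocompact word_algebra I"
proof
  assume "ba_hypocompact word_algebra I"
  moreover have "I \<subseteq> ba_carrier word_algebra" "ba_zero word_algebra \<in> I"
    using I unfolding ba_ideal_def by blast+
  ultimately obtain a where "a \<in> I" "a \<noteq> ba_zero word_algebra"
    "ba_compact_elem_quot word_algebra I {ba_zero word_algebra} a"
    using \<open>I \<noteq> {ba_zero word_algebra}\<close> word_algebra_zero_ideal word_algebra_zero_closed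
    unfolding ba_hypocompact_def by blast
  then show False
    using word_algebra_no_compact_elem[OF I] by blast
qed

theorem proposition3p4:
  shows "\<exists>A :: (nat \<Rightarrow> real \<Rightarrow> complex) balg.
    banach_algebra A \<and> ba_carrier A \<noteq> {ba_zero A} \<and>
    compactly_quasinilpotent A \<and>
    (\<forall>I. ba_ideal A (ba_carrier A) I \<and> I \<noteq> {ba_zero A} \<longrightarrow> \<not> ba_hypocompact A I)"
  using banach_algebra_word_algebra word_algebra_nontrivial compactly_quasinilpotent_word_algebra
    word_algebra_not_hypocompact by blast

end
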